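(* Let $X$ be a real Banach space with $\dim X\ge 2$ and let $\alpha,\beta>0$. Then $$\alpha+\beta\le DW_B(X,\alpha,\beta)\le\max\{2\alpha+\beta,\ \alpha+2\beta\}.$$
   Context: For $x,y\in X$, $x$ is Birkhoff orthogonal to $y$, written $x\perp_B y$, if $\|x+\lambda y\|\ge\|x\|$ for all $\lambda\in\mathbb R$. For $\alpha,\beta>0$, $$DW_B(X,\alpha,\beta)=\sup\left\{\frac{\alpha\|x\|+\beta\|y\|}{\|x-y\|}\left\|\frac{x}{\|x\|}-\frac{y}{\|y\|}\right\|: x,y\in X\setminus\{0\},\ x\perp_B y\right\}.$$ *)

theory Defs
  imports "HOL-Analysis.Analysis" "HOL-Library.Extended_Real"
begin

definition birkhoff_orth :: "'a::real_normed_vector \<Rightarrow> 'a \<Rightarrow> bool" where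
  "birkhoff_orth x y \<longleftrightarrow> (\<forall>t::real. norm (x + t *\<^sub>R y) \<ge> norm x)"

text \<open>Supremum taken in the extended reals, so that an unbounded set gives infinity.\<close>
definition DW_B :: "'a::real_normed_vector itself \<Rightarrow> real \<Rightarrow> real \<Rightarrow> ereal" where
  "DW_B _ \<alpha> \<beta> = (SUP p \<in> {(x::'a, y). x \<noteq> 0 \<and> y \<noteq> 0 \<and> birkhoff_orth x y}.
      ereal ((\<alpha> * norm (fst p) + \<beta> * norm (snd p)) / norm (fst p - snd p)
        * norm (fst p /\<^sub>R norm (fst p) - snd p /\<^sub>R norm (snd p))))"

end

theory Submission imports Defs begin

text \<open>
Write \<open>a = \<parallel>x\<parallel>\<close>, \<open>b = \<parallel>y\<parallel>\<close>, \<open>D = \<parallel>x - y\<parallel>\<close> and \<open>N = \<parallel>x/a - y/b\<parallel>\<close>.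
The triangle inequality gives \<open>N max(a, b) \<le> D + |a - b|\<close>, Birkhoff orthogonality gives
\<open>D \<ge> a\<close>, and trivially \<open>D \<ge> b - a\<close>. These three inequalities alone force
\<open>(\<alpha>a + \<beta>b) N \<le> (2\<alpha> + \<beta>) D\<close> if \<open>a \<ge> b\<close> and \<open>(\<alpha>a + \<beta>b) N \<le> (\<alpha> + 2\<beta>) D\<close> if \<open>a \<le> b\<close>.
For the lower bound, minimising \<open>t \<mapsto> \<parallel>x + t z\<parallel>\<close> for independent \<open>x, z\<close> yields a nonzero
vector Birkhoff orthogonal to \<open>z\<close>; for unit vectors \<open>p \<bottom>\<^sub>B q\<close> the quotient is exactly
\<open>\<alpha> + \<beta>\<close>, since then \<open>N = D \<ge> 1\<close>.
\<close>

lemma weighted_quotient_bound_ge: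
  fixes a b D N \<alpha> \<beta> :: real
  assumes "0 < a" "0 \<le> b" "b \<le> a" "a \<le> D" "N * a \<le> D + (a - b)" "0 \<le> \<alpha>" "0 \<le> \<beta>"
  shows "(\<alpha> * a + \<beta> * b) * N \<le> (2 * \<alpha> + \<beta>) * D"
proof -
  have "(\<alpha> * a + \<beta> * b) * (N * a) \<le> (\<alpha> * a + \<beta> * b) * (D + (a - b))"
    using assms by (intro mult_left_mono) auto
  also have "\<dots> \<le> (2 * \<alpha> + \<beta>) * D * a"
  proof -
    have "\<alpha> * (a * (a - b)) \<le> \<alpha> * (a * D)"
      using assms by (intro mult_left_mono) auto
    moreover have "0 \<le> \<beta> * ((a - b) * (D - b))"
      using assms by simp
    ultimately show ?thesis by (simp add: algebra_simps)
  qed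
  finally show ?thesis using assms(1) by (simp add: mult.assoc)
qed

lemma weighted_quotient_bound_le:
  fixes a b D N \<alpha> \<beta> :: real
  assumes "0 \<le> a" "a \<le> b" "0 < b" "a \<le> D" "b - a \<le> D" "N * b \<le> D + (b - a)" "0 \<le> \<alpha>" "0 \<le> \<beta>"
  shows "(\<alpha> * a + \<beta> * b) * N \<le> (\<alpha> + 2 * \<beta>) * D"
proof -
  have "(\<alpha> * a + \<beta> * b) * (N * b) \<le> (\<alpha> * a + \<beta> * b) * (D + (b - a))"
    using assms by (intro mult_left_mono) auto
  also have "\<dots> \<le> (\<alpha> + 2 * \<beta>) * D * b"
  proof -
    have "0 \<le> \<alpha> * ((b - a) * (D - a))"
      using assms by simp
    moreover have "\<beta> * (b * (b - a)) \<le> \<beta> * (b * D)"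
      using assms by (intro mult_left_mono) auto
    ultimately show ?thesis by (simp add: algebra_simps)
  qed
  finally show ?thesis using assms(3) by (simp add: mult.assoc)
qed

lemma norm_diff_normalized_mult_norm_le:
  fixes x y :: "'a::real_normed_vector"
  shows "norm (x /\<^sub>R norm x - y /\<^sub>R norm y) * norm x \<le> norm (x - y) + \<bar>norm x - norm y\<bar>"
proof (cases "y = 0")
  case True
  then show ?thesis by (cases "x = 0") simp_all
next
  case False
  then have "norm y > 0" by simp
  have "norm x *\<^sub>R (x /\<^sub>R norm x - y /\<^sub>R norm y) = (x - y) + ((1 - norm x / norm y) *\<^sub>R y)"
    using \<open>norm y > 0\<close> by (cases "x = 0") (simp_all add: algebra_simps divide_inverse)
  then have "norm (x /\<^sub>R norm x - y /\<^sub>R norm y) * norm x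
      = norm ((x - y) + ((1 - norm x / norm y) *\<^sub>R y))"
    by (metis abs_norm_cancel mult.commute norm_scaleR)
  also have "\<dots> \<le> norm (x - y) + \<bar>1 - norm x / norm y\<bar> * norm y"
    by (metis norm_scaleR norm_triangle_ineq)
  also have "\<bar>1 - norm x / norm y\<bar> * norm y = \<bar>norm x - norm y\<bar>"
    using \<open>norm y > 0\<close> by (simp add: field_simps abs_minus_commute flip: abs_mult)
  finally show ?thesis .
qed

lemma norm_diff_normalized_mult_max_le:
  fixes x y :: "'a::real_normed_vector"
  shows "norm (x /\<^sub>R norm x - y /\<^sub>R norm y) * max (norm x) (norm y)
    \<le> norm (x - y) + \<bar>norm x - norm y\<bar>"
  using norm_diff_normalized_mult_norm_le[of x y] norm_diff_normalized_mult_norm_le[of y x]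
  by (auto simp: max_def norm_minus_commute abs_minus_commute)

lemma birkhoff_orth_norm_le_diff:
  assumes "birkhoff_orth x y"
  shows "norm x \<le> norm (x - y)"
  using assms unfolding birkhoff_orth_def by (metis diff_conv_add_uminus scaleR_minus1_left)

lemma birkhoff_orth_scaleR:
  assumes "birkhoff_orth x y" "a \<noteq> 0"
  shows "birkhoff_orth (a *\<^sub>R x) (b *\<^sub>R y)"
  unfolding birkhoff_orth_def
proof
  fix t :: real
  have "\<bar>a\<bar> * norm x \<le> \<bar>a\<bar> * norm (x + (t * b / a) *\<^sub>R y)"
    using assms(1) unfolding birkhoff_orth_def by (simp add: mult_left_mono)
  also have "\<dots> = norm (a *\<^sub>R x + t *\<^sub>R (b *\<^sub>R y))"
    using assms(2) by (simp add: scaleR_add_right flip: norm_scaleR)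
  finally show "norm (a *\<^sub>R x) \<le> norm (a *\<^sub>R x + t *\<^sub>R (b *\<^sub>R y))" by simp
qed

lemma dw_quotient_le:
  fixes x y :: "'a::real_normed_vector"
  assumes "x \<noteq> 0" "birkhoff_orth x y" "0 \<le> \<alpha>" "0 \<le> \<beta>"
  shows "(\<alpha> * norm x + \<beta> * norm y) / norm (x - y) * norm (x /\<^sub>R norm x - y /\<^sub>R norm y)
     \<le> max (2 * \<alpha> + \<beta>) (\<alpha> + 2 * \<beta>)"
proof -
  let ?N = "norm (x /\<^sub>R norm x - y /\<^sub>R norm y)"
  have D_ge: "norm x \<le> norm (x - y)" "norm y - norm x \<le> norm (x - y)"
    using birkhoff_orth_norm_le_diff[OF assms(2)] norm_triangle_ineq3[of y x]
    by (simp_all add: norm_minus_commute)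
  have N_le: "?N * max (norm x) (norm y) \<le> norm (x - y) + \<bar>norm x - norm y\<bar>"
    by (rule norm_diff_normalized_mult_max_le)
  have "(\<alpha> * norm x + \<beta> * norm y) * ?N \<le> max (2 * \<alpha> + \<beta>) (\<alpha> + 2 * \<beta>) * norm (x - y)"
  proof (cases "norm y \<le> norm x")
    case True
    then have "(\<alpha> * norm x + \<beta> * norm y) * ?N \<le> (2 * \<alpha> + \<beta>) * norm (x - y)"
      using assms D_ge N_le by (intro weighted_quotient_bound_ge) (auto simp: max_def)
    then show ?thesis
      by (smt (verit) max.cobounded1 mult_right_mono norm_ge_zero)
  next
    case False
    then have "(\<alpha> * norm x + \<beta> * norm y) * ?N \<le> (\<alpha> + 2 * \<beta>) * norm (x - y)"
      using assms D_ge N_le by (intro weighted_quotient_bound_le) (auto simp: max_def)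
    then show ?thesis
      by (smt (verit) max.cobounded2 mult_right_mono norm_ge_zero)
  qed
  moreover have "0 < norm (x - y)"
    using D_ge(1) assms(1) by (metis order.strict_trans2 zero_less_norm_iff)
  ultimately show ?thesis
    by (simp add: divide_le_eq mult.commute mult.left_commute)
qed

lemma birkhoff_orth_exists:
  fixes x z :: "'a::real_normed_vector"
  shows "\<exists>t. birkhoff_orth (x + t *\<^sub>R z) z"
proof (cases "z = 0")
  case True
  then show ?thesis by (simp add: birkhoff_orth_def)
next
  case False
  define R where "R = 2 * norm x / norm z"
  have "\<exists>t\<in>{-R..R}. \<forall>s\<in>{-R..R}. norm (x + t *\<^sub>R z) \<le> norm (x + s *\<^sub>R z)"
    by (intro continuous_attains_inf) (auto simp: R_def intro!: continuous_intros)
  then obtain t where t: "\<And>s. s \<in> {-R..R} \<Longrightarrow> norm (x + t *\<^sub>R z) \<le> norm (x + s *\<^sub>R z)"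
    by blast
  \<comment> \<open>Outside \<open>[-R, R]\<close> the norm exceeds \<open>\<parallel>x\<parallel>\<close>, the value at \<open>s = 0\<close>, so \<open>t\<close> is a global minimiser.\<close>
  have min: "norm (x + t *\<^sub>R z) \<le> norm (x + s *\<^sub>R z)" for s
  proof (cases "s \<in> {-R..R}")
    case True
    then show ?thesis using t by blast
  next
    case outside: False
    have "0 \<le> R" by (simp add: R_def)
    then have "norm (x + t *\<^sub>R z) \<le> norm x" using t[of 0] by simp
    also have "\<dots> < \<bar>s\<bar> * norm z - norm x"
    proof -
      have "R * norm z < \<bar>s\<bar> * norm z"
        using outside False by auto
      then show ?thesis
        using False by (simp add: R_def)
    qed
    also have "\<dots> \<le> norm (x + s *\<^sub>R z)"
      using norm_diff_ineq[of "s *\<^sub>R z" x] by (simp add: add.commute)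
    finally show ?thesis by simp
  qed
  have "birkhoff_orth (x + t *\<^sub>R z) z"
    unfolding birkhoff_orth_def
    using min by (metis add.assoc scaleR_add_left)
  then show ?thesis ..
qed

lemma exists_unit_birkhoff_orth_pair:
  assumes "\<exists>S :: 'a::real_normed_vector set. independent S \<and> card S = 2"
  shows "\<exists>p q :: 'a. norm p = 1 \<and> norm q = 1 \<and> birkhoff_orth p q"
proof -
  obtain x z :: 'a where xz: "independent {x, z}" "x \<noteq> z"
  proof -
    obtain S :: "'a set" where "independent S" "card S = 2"
      using assms by blast
    then show ?thesis
      using that by (metis card_2_iff)
  qed
  then have "z \<noteq> 0"
    using dependent_zero by blast
  have "x \<notin> span {z}"
  proof -
    have "x \<notin> span ({x, z} - {x})"
      using xz(1) unfolding dependent_def by (meson insertI1)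
    moreover have "{x, z} - {x} = {z}"
      using xz(2) by auto
    ultimately show ?thesis
      by simp
  qed
  obtain t where t: "birkhoff_orth (x + t *\<^sub>R z) z"
    using birkhoff_orth_exists by blast
  have "x + t *\<^sub>R z \<noteq> 0"
  proof
    assume "x + t *\<^sub>R z = 0"
    then have "x = (- t) *\<^sub>R z"
      by (simp add: eq_neg_iff_add_eq_0)
    then show False
      using \<open>x \<notin> span {z}\<close> by (metis span_base span_scale singletonI)
  qed
  then have "norm ((x + t *\<^sub>R z) /\<^sub>R norm (x + t *\<^sub>R z)) = 1"
    by simp
  moreover have "norm (z /\<^sub>R norm z) = 1"
    using \<open>z \<noteq> 0\<close> by simp
  moreover have "birkhoff_orth ((x + t *\<^sub>R z) /\<^sub>R norm (x + t *\<^sub>R z)) (z /\<^sub>R norm z)"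
    using t \<open>x + t *\<^sub>R z \<noteq> 0\<close> by (intro birkhoff_orth_scaleR) simp_all
  ultimately show ?thesis
    by blast
qed

lemma dw_quotient_unit:
  fixes p q :: "'a::real_normed_vector"
  assumes "norm p = 1" "norm q = 1" "birkhoff_orth p q"
  shows "(\<alpha> * norm p + \<beta> * norm q) / norm (p - q) * norm (p /\<^sub>R norm p - q /\<^sub>R norm q) = \<alpha> + \<beta>"
proof -
  have "norm (p - q) \<noteq> 0"
    using birkhoff_orth_norm_le_diff[OF assms(3)] assms(1) by linarith
  then show ?thesis
    using assms(1,2) by simp
qed

theorem proposition3:
  fixes \<alpha> \<beta> :: real
  assumes "\<exists>S :: 'a::banach set. independent S \<and> card S = 2"
    and "\<alpha> > 0" and "\<beta> > 0"
  shows "ereal (\<alpha> + \<beta>) \<le> DW_B TYPE('a) \<alpha> \<beta>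
    \<and> DW_B TYPE('a) \<alpha> \<beta> \<le> ereal (max (2 * \<alpha> + \<beta>) (\<alpha> + 2 * \<beta>))"
proof
  obtain p q :: 'a where pq: "norm p = 1" "norm q = 1" "birkhoff_orth p q"
    using exists_unit_birkhoff_orth_pair[OF assms(1)] by blast
  then have "(p, q) \<in> {(x, y). x \<noteq> 0 \<and> y \<noteq> 0 \<and> birkhoff_orth x y}"
    by auto
  then show "ereal (\<alpha> + \<beta>) \<le> DW_B TYPE('a) \<alpha> \<beta>"
    unfolding DW_B_def
    by (rule SUP_upper2) (simp only: fst_conv snd_conv dw_quotient_unit[OF pq] order_refl)
next
  show "DW_B TYPE('a) \<alpha> \<beta> \<le> ereal (max (2 * \<alpha> + \<beta>) (\<alpha> + 2 * \<beta>))"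
    unfolding DW_B_def
  proof (rule SUP_least, clarify)
    fix x y :: 'a
    assume "x \<noteq> 0" "y \<noteq> 0" "birkhoff_orth x y"
    then show "ereal ((\<alpha> * norm (fst (x, y)) + \<beta> * norm (snd (x, y))) / norm (fst (x, y) - snd (x, y))
        * norm (fst (x, y) /\<^sub>R norm (fst (x, y)) - snd (x, y) /\<^sub>R norm (snd (x, y))))
      \<le> ereal (max (2 * \<alpha> + \<beta>) (\<alpha> + 2 * \<beta>))"
      using assms(2,3) by (simp only: fst_conv snd_conv ereal_less_eq) (rule dw_quotient_le; simp)
  qed
qed

end
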